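(* Let $a,b\in\mathbb{Z}$, $a\ne0$, $\mathcal{G}(x)=x^8+ax^6+bx^4+ax^2+1$, and $W_1=b+2-2a$, $W_2=b+2+2a$, $W_3=a^2-4b+8$. (1) If there is a prime $q$ with $q^2\mid W_1$ or $q^2\mid W_2$, then $\mathcal{G}(x)$ is not monogenic. (2) If $W_1$ and $W_2$ are squarefree and there is a prime $q\ge 3$ with $q^2\mid W_3$, then $\mathcal{G}(x)$ is not monogenic. (3) If $W_1,W_2$ are squarefree, $W_3$ is not divisible by the square of any odd prime, and $(a\bmod 4,\ b\bmod 4)\in\{(0,1),(2,3)\}$, then $\mathcal{G}(x)$ is not monogenic.
   Context: A monic polynomial $f(x)\in\mathbb{Z}[x]$ is monogenic if it is irreducible over $\mathbb{Q}$ and $\mathbb{Z}[\theta]$ is the full ring of integers of $\mathbb{Q}(\theta)$, where $f(\theta)=0$. *)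

theory Defs
  imports "HOL-Computational_Algebra.Computational_Algebra" Complex_Main
begin

definition algebraic_int :: "complex \<Rightarrow> bool" where
  "algebraic_int x \<longleftrightarrow> (\<exists>p :: int poly. lead_coeff p = 1 \<and> poly (map_poly of_int p) x = 0)"

definition rat_field_gen :: "complex \<Rightarrow> complex set" where
  "rat_field_gen \<theta> = {poly (map_poly of_rat p) \<theta> / poly (map_poly of_rat q) \<theta> | p q :: rat poly.
                         poly (map_poly of_rat q) \<theta> \<noteq> 0}"

definition ring_of_integers_gen :: "complex \<Rightarrow> complex set" where
  "ring_of_integers_gen \<theta> = {x \<in> rat_field_gen \<theta>. algebraic_int x}"

definition int_ring_gen :: "complex \<Rightarrow> complex set" where
  "int_ring_gen \<theta> = {poly (map_poly of_int p) \<theta> | p :: int poly. True}"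

text \<open>A monic integer polynomial is monogenic if it is irreducible over Q and
  Z[theta] is the full ring of integers of Q(theta) for a root theta of f
  (the choice of root is immaterial since all roots are conjugate).\<close>
definition monogenic :: "int poly \<Rightarrow> bool" where
  "monogenic f \<longleftrightarrow> lead_coeff f = 1 \<and> irreducible (map_poly (of_int :: int \<Rightarrow> rat) f) \<and>
     (\<forall>\<theta> :: complex. poly (map_poly of_int f) \<theta> = 0 \<longrightarrow> int_ring_gen \<theta> = ring_of_integers_gen \<theta>)"

end

theory Submission
  imports Defs "HOL-Computational_Algebra.Field_as_Ring"
begin

(* If G is monogenic, an algebraic integer of Q(theta) of the form n(theta) / (q * theta^k),
   with n an integer polynomial of degree below 8, is an integer polynomial in theta of degree
   below 8; by irreducibility of G that representation is unique, so q divides every coefficient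
   of n. The reciprocal symmetry of G produces such elements: t = theta^2 + theta^-2 satisfies
   t^2 + a t + b - 2 = 0, so u = theta + s/theta (s = 1 or -1) is a root of
   u^4 + (a - 4s) u^2 + (b + 2 - 2sa), and w = 2t + a satisfies w^2 = W3.
   If q^2 divides b + 2 - 2sa then u (u^2 + a - 4s) / q is integral; if q^2 divides W3 with q odd
   or q = 4 then w / q is; and if W3 = 4 (mod 16) then (2 + w) / 4 is, being a root of
   y^2 - y - (W3 - 4)/16. *)

lemma map_poly_add:
  fixes h :: "'a::comm_ring_1 \<Rightarrow> 'b::comm_ring_1"
  assumes "\<And>x y. h (x + y) = h x + h y" "h 0 = 0"
  shows "map_poly h (p + q) = map_poly h p + map_poly h q"
  by (rule poly_eqI) (simp add: coeff_map_poly assms)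

lemma map_poly_diff:
  fixes h :: "'a::comm_ring_1 \<Rightarrow> 'b::comm_ring_1"
  assumes "\<And>x y. h (x - y) = h x - h y" "h 0 = 0"
  shows "map_poly h (p - q) = map_poly h p - map_poly h q"
  by (rule poly_eqI) (simp add: coeff_map_poly assms)

lemma map_poly_mult:
  fixes h :: "'a::comm_ring_1 \<Rightarrow> 'b::comm_ring_1"
  assumes add: "\<And>x y. h (x + y) = h x + h y" and mult: "\<And>x y. h (x * y) = h x * h y"
    and zero: "h 0 = 0"
  shows "map_poly h (p * q) = map_poly h p * map_poly h q"
proof (induction p)
  case (pCons c p)
  show ?case
    by (simp add: mult_pCons_left map_poly_add[OF add zero] map_poly_smult[of h, OF zero mult]
        map_poly_pCons[of h, OF zero] pCons add mult zero)
qed simp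

lemmas of_int_poly_add = map_poly_add[where h = of_int, simplified]
lemmas of_int_poly_mult = map_poly_mult[where h = of_int, simplified]
lemmas of_rat_poly_add = map_poly_add[of of_rat, OF of_rat_add of_rat_0]
lemmas of_rat_poly_diff = map_poly_diff[of of_rat, OF of_rat_diff of_rat_0]
lemmas of_rat_poly_mult = map_poly_mult[of of_rat, OF of_rat_add of_rat_mult of_rat_0]

lemma int_ring_gen_reduce:
  fixes f :: "int poly" and \<theta> :: complex
  assumes monic: "lead_coeff f = 1" and deg: "degree f > 0"
    and root: "poly (map_poly of_int f) \<theta> = 0" and x: "x \<in> int_ring_gen \<theta>"
  obtains r where "degree r < degree f" "x = poly (map_poly of_int r) \<theta>"
proof -
  from x obtain p where p: "x = poly (map_poly of_int p) \<theta>"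
    unfolding int_ring_gen_def by blast
  obtain d r where div: "pseudo_divmod p f = (d, r)" by fastforce
  have f0: "f \<noteq> 0" using deg by auto
  have "p = f * d + r" using pseudo_divmod(1)[OF f0 div] monic by simp
  then have "x = poly (map_poly of_int r) \<theta>"
    using p root by (simp add: of_int_poly_add of_int_poly_mult)
  moreover have "degree r < degree f" using pseudo_divmod(2)[OF f0 div] deg by auto
  ultimately show thesis using that by blast
qed

lemma int_ring_gen_mult_power:
  assumes "x \<in> int_ring_gen \<theta>"
  shows "\<theta> ^ k * x \<in> int_ring_gen \<theta>"
proof -
  from assms obtain p where "x = poly (map_poly of_int p) \<theta>"
    unfolding int_ring_gen_def by blast
  then have "\<theta> ^ k * x = poly (map_poly of_int (monom 1 k * p)) \<theta>"
    by (simp add: of_int_poly_mult map_poly_monom poly_monom)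
  then show ?thesis unfolding int_ring_gen_def by blast
qed

lemma rat_field_gen_div_power:
  assumes "\<theta> \<noteq> 0"
  shows "poly (map_poly of_rat r) \<theta> / \<theta> ^ k \<in> rat_field_gen \<theta>"
proof -
  have "poly (map_poly of_rat (monom 1 k)) \<theta> = \<theta> ^ k"
    by (simp add: map_poly_monom poly_monom)
  then show ?thesis
    unfolding rat_field_gen_def using assms by (intro CollectI exI[of _ r] exI[of _ "monom 1 k"]) simp
qed

lemma irreducible_common_root_imp_eq_0:
  fixes F g :: "rat poly" and \<theta> :: complex
  assumes irr: "irreducible F" and deg: "degree g < degree F"
    and root_F: "poly (map_poly of_rat F) \<theta> = 0" and root_g: "poly (map_poly of_rat g) \<theta> = 0"
  shows "g = 0"
proof (rule ccontr)
  assume "g \<noteq> 0"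
  then have "\<not> F dvd g" using deg by (metis dvd_imp_degree_le leD)
  then have "coprime F g"
    by (rule prime_elem_imp_coprime[OF irreducible_imp_prime_poly[OF irr]])
  then obtain u v where "u * F + v * g = 1"
    using bezout_coefficients_fst_snd[of F g] by fastforce
  then have "poly (map_poly of_rat (u * F + v * g)) \<theta> = 1" by simp
  then show False using root_F root_g by (simp add: of_rat_poly_add of_rat_poly_mult)
qed

lemma monogenic_coeff_Ints:
  fixes f :: "int poly" and r :: "rat poly" and \<theta> :: complex
  assumes mono: "monogenic f" and root: "poly (map_poly of_int f) \<theta> = 0" and "\<theta> \<noteq> 0"
    and deg: "degree r < degree f"
    and alg: "algebraic_int (poly (map_poly of_rat r) \<theta> / \<theta> ^ k)"
  shows "coeff r j \<in> \<int>"
proof -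
  have monic: "lead_coeff f = 1" and irr: "irreducible (map_poly (of_int :: int \<Rightarrow> rat) f)"
    and ring_eq: "int_ring_gen \<theta> = ring_of_integers_gen \<theta>"
    using mono root unfolding monogenic_def by auto
  let ?x = "poly (map_poly of_rat r) \<theta>"
  have "?x / \<theta> ^ k \<in> int_ring_gen \<theta>"
    using alg rat_field_gen_div_power[OF \<open>\<theta> \<noteq> 0\<close>] ring_eq
    unfolding ring_of_integers_gen_def by blast
  then have "?x \<in> int_ring_gen \<theta>"
    using int_ring_gen_mult_power[of "?x / \<theta> ^ k" \<theta> k] \<open>\<theta> \<noteq> 0\<close> by simp
  moreover have "degree f > 0" using deg by simp
  ultimately obtain p where deg_p: "degree p < degree f" and p: "?x = poly (map_poly of_int p) \<theta>"
    using int_ring_gen_reduce[OF monic _ root] by blast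
  have of_rat_of_int: "map_poly (of_rat :: rat \<Rightarrow> complex) (map_poly of_int h) = map_poly of_int h"
    for h :: "int poly"
    by (simp add: map_poly_map_poly o_def)
  define g where "g = map_poly of_int p - r"
  have "degree (map_poly (of_int :: int \<Rightarrow> rat) p) < degree f"
    using deg_p map_poly_degree_leq[of "of_int :: int \<Rightarrow> rat" p] by simp
  then have "degree g < degree (map_poly (of_int :: int \<Rightarrow> rat) f)"
    unfolding g_def using deg monic degree_diff_le_max[of "map_poly of_int p" r]
    by (simp add: map_poly_degree_eq)
  moreover have "poly (map_poly of_rat g) \<theta> = 0"
    unfolding g_def using p by (simp add: of_rat_poly_diff of_rat_of_int)
  ultimately have "g = 0"
    using irreducible_common_root_imp_eq_0[OF irr] root by (simp add: of_rat_of_int)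
  then have "r = map_poly of_int p" unfolding g_def by simp
  then show ?thesis by (simp add: coeff_map_poly)
qed

lemma not_monogenic_if_integral_fraction:
  fixes f n :: "int poly" and q :: int and \<theta> y :: complex
  assumes root: "poly (map_poly of_int f) \<theta> = 0" and "\<theta> \<noteq> 0"
    and deg: "degree n < degree f" and "q \<noteq> 0" and ndvd: "\<not> q dvd coeff n j"
    and alg: "algebraic_int y" and y: "of_int q * \<theta> ^ k * y = poly (map_poly of_int n) \<theta>"
  shows "\<not> monogenic f"
proof
  assume mono: "monogenic f"
  define r :: "rat poly" where "r = smult (1 / of_int q) (map_poly of_int n)"
  have "poly (map_poly of_rat r) \<theta> = poly (map_poly of_int n) \<theta> / of_int q"
    by (simp add: r_def map_poly_smult[of of_rat, OF of_rat_0 of_rat_mult] of_rat_divide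
        map_poly_map_poly o_def divide_simps)
  also have "\<dots> = y * \<theta> ^ k"
    using y \<open>q \<noteq> 0\<close> by (simp add: divide_eq_eq algebra_simps)
  finally have y_eq: "y = poly (map_poly of_rat r) \<theta> / \<theta> ^ k"
    using \<open>\<theta> \<noteq> 0\<close> by simp
  have "degree r < degree f"
    unfolding r_def using deg map_poly_degree_leq[of "of_int :: int \<Rightarrow> rat" n] by simp
  from monogenic_coeff_Ints[OF mono root \<open>\<theta> \<noteq> 0\<close> this] alg
  have "coeff r j \<in> \<int>" unfolding y_eq .
  then obtain m where "of_int (coeff n j) / of_int q = (of_int m :: rat)"
    by (simp add: r_def coeff_map_poly) (erule Ints_cases)
  then have "(of_int (coeff n j) :: rat) = of_int (q * m)"
    using \<open>q \<noteq> 0\<close> by (simp add: field_simps)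
  then have "coeff n j = q * m" by (simp only: of_int_eq_iff)
  then show False using ndvd by simp
qed

lemma algebraic_int_quadratic:
  fixes y :: complex
  assumes "y ^ 2 + of_int c * y + of_int d = 0"
  shows "algebraic_int y"
  unfolding algebraic_int_def
  by (rule exI[of _ "[:d, c, 1:]"]) (use assms in \<open>simp add: map_poly_pCons algebra_simps power2_eq_square\<close>)

lemma algebraic_int_biquadratic:
  fixes y :: complex
  assumes "y ^ 4 + of_int c * y ^ 2 + of_int d = 0"
  shows "algebraic_int y"
  unfolding algebraic_int_def
  by (rule exI[of _ "[:d, 0, c, 0, 1:]"])
    (use assms in \<open>simp add: map_poly_pCons algebra_simps power2_eq_square power4_eq_xxxx\<close>)

lemma biquadratic_root_rescale:
  fixes u c W Q \<kappa> :: "'a::field"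
  assumes "u ^ 4 + c * u ^ 2 + W = 0" and "W = Q ^ 2 * \<kappa>" and "Q \<noteq> 0"
  shows "(u * (u ^ 2 + c) / Q) ^ 4 + c * \<kappa> * (u * (u ^ 2 + c) / Q) ^ 2 + \<kappa> ^ 2 * W = 0"
proof -
  define y where "y = u * (u ^ 2 + c) / Q"
  have uu: "u ^ 2 * (u ^ 2 + c) = - W" using assms(1) by algebra
  have "(u * (u ^ 2 + c)) ^ 2 = u ^ 2 * (u ^ 2 + c) * (u ^ 2 + c)" by algebra
  then have y2: "y ^ 2 = - \<kappa> * (u ^ 2 + c)"
    using uu assms(2,3) by (simp add: y_def power_divide)
  have "y ^ 4 = (y ^ 2) ^ 2" by simp
  then have "y ^ 4 + c * \<kappa> * y ^ 2 + \<kappa> ^ 2 * W = \<kappa> ^ 2 * (u ^ 2 * (u ^ 2 + c) + W)"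
    using y2 by algebra
  then show ?thesis using uu by (simp add: y_def)
qed

lemma poly_reciprocal_octic:
  "poly (map_poly of_int [:1, 0, a, 0, b, 0, a, 0, 1:]) (x :: complex)
     = x ^ 8 + of_int a * x ^ 6 + of_int b * x ^ 4 + of_int a * x ^ 2 + 1"
  by (simp add: map_poly_pCons algebra_simps eval_nat_numeral)

lemma reciprocal_octic_root_exists:
  obtains \<theta> :: complex where "poly (map_poly of_int [:1, 0, a, 0, b, 0, a, 0, 1:]) \<theta> = 0"
proof -
  have "degree (map_poly (of_int :: int \<Rightarrow> complex) [:1, 0, a, 0, b, 0, a, 0, 1:]) = 8"
    by (simp add: map_poly_pCons)
  then show thesis
    using fundamental_theorem_of_algebra that by (fastforce simp: constant_degree)
qed

lemma reciprocal_octic_trace_equation: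
  fixes \<theta> A B :: "'a::field"
  assumes "\<theta> \<noteq> 0" and "\<theta> ^ 8 + A * \<theta> ^ 6 + B * \<theta> ^ 4 + A * \<theta> ^ 2 + 1 = 0"
  shows "(\<theta> ^ 2 + 1 / \<theta> ^ 2) ^ 2 + A * (\<theta> ^ 2 + 1 / \<theta> ^ 2) + B - 2 = 0"
proof -
  have "(\<theta> ^ 2 + 1 / \<theta> ^ 2) ^ 2 + A * (\<theta> ^ 2 + 1 / \<theta> ^ 2) + B - 2
      = (\<theta> ^ 8 + A * \<theta> ^ 6 + B * \<theta> ^ 4 + A * \<theta> ^ 2 + 1) / \<theta> ^ 4"
    using assms(1) by (simp add: field_simps eval_nat_numeral)
  then show ?thesis using assms(2) by simp
qed

lemma reciprocal_octic_root_trace: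
  fixes a b :: int
  obtains \<theta> :: complex
  where "poly (map_poly of_int [:1, 0, a, 0, b, 0, a, 0, 1:]) \<theta> = 0" and "\<theta> \<noteq> 0"
    and "(\<theta> ^ 2 + 1 / \<theta> ^ 2) ^ 2 + of_int a * (\<theta> ^ 2 + 1 / \<theta> ^ 2) + of_int b - 2 = 0"
proof -
  obtain \<theta> :: complex where root: "poly (map_poly of_int [:1, 0, a, 0, b, 0, a, 0, 1:]) \<theta> = 0"
    by (rule reciprocal_octic_root_exists)
  then have "\<theta> \<noteq> 0" by (auto simp: poly_reciprocal_octic)
  with root show thesis
    using that reciprocal_octic_trace_equation[OF \<open>\<theta> \<noteq> 0\<close>] by (simp add: poly_reciprocal_octic)
qed

lemma not_monogenic_if_square_dvd_W12:
  fixes a b s q \<kappa> :: int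
  assumes s: "s ^ 2 = 1" and q: "q \<ge> 2" and W: "b + 2 - 2 * s * a = q ^ 2 * \<kappa>"
  shows "\<not> monogenic [:1, 0, a, 0, b, 0, a, 0, 1:]"
proof -
  obtain \<theta> :: complex where root: "poly (map_poly of_int [:1, 0, a, 0, b, 0, a, 0, 1:]) \<theta> = 0"
    and "\<theta> \<noteq> 0" and trace: "(\<theta> ^ 2 + 1 / \<theta> ^ 2) ^ 2 + of_int a * (\<theta> ^ 2 + 1 / \<theta> ^ 2) + of_int b - 2 = 0"
    by (rule reciprocal_octic_root_trace)
  define \<iota> where "\<iota> = 1 / \<theta>"
  define S where "S = (of_int s :: complex)"
  define c where "c = of_int a - 4 * S"
  define u where "u = \<theta> + S * \<iota>"
  define y where "y = u * (u ^ 2 + c) / of_int q"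
  have \<iota>: "\<theta> * \<iota> = 1" using \<open>\<theta> \<noteq> 0\<close> by (simp add: \<iota>_def)
  have S2: "S * S = 1" using s unfolding S_def by (metis of_int_1 of_int_mult power2_eq_square)
  have trace': "(\<theta> ^ 2 + \<iota> ^ 2) ^ 2 + of_int a * (\<theta> ^ 2 + \<iota> ^ 2) + of_int b - 2 = 0"
    using trace by (simp add: \<iota>_def power_one_over)
  have u2: "u ^ 2 = \<theta> ^ 2 + \<iota> ^ 2 + 2 * S" unfolding u_def using \<iota> S2 by algebra
  have "u ^ 4 + c * u ^ 2 + of_int (b + 2 - 2 * s * a) = 0"
  proof -
    have "u ^ 4 = (u ^ 2) ^ 2" by simp
    then show ?thesis using u2 S2 trace' by (simp add: c_def S_def) algebra
  qed
  from biquadratic_root_rescale[OF this _ ] W q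
  have "y ^ 4 + of_int ((a - 4 * s) * \<kappa>) * y ^ 2 + of_int (\<kappa> ^ 2 * (b + 2 - 2 * s * a)) = 0"
    by (simp add: y_def c_def S_def)
  then have "algebraic_int y" by (rule algebraic_int_biquadratic)
  moreover have "of_int q * \<theta> ^ 3 * y
      = poly (map_poly of_int [:s, 0, s * a - 1, 0, a - s, 0, 1:]) \<theta>"
  proof -
    have "of_int q * \<theta> ^ 3 * y = (\<theta> * u) * (\<theta> ^ 2 * (u ^ 2 + c))"
      using q by (simp add: y_def eval_nat_numeral)
    also have "\<dots> = (\<theta> ^ 2 + S) * (\<theta> ^ 4 + (of_int a - 2 * S) * \<theta> ^ 2 + 1)"
      unfolding c_def u_def using \<iota> S2 by algebra
    finally show ?thesis using S2 by (simp add: map_poly_pCons S_def) algebra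
  qed
  moreover have "degree [:s, 0, s * a - 1, 0, a - s, 0, 1:] < degree [:1, 0, a, 0, b, 0, a, 0, 1:]"
    by simp
  moreover have "\<not> q dvd coeff [:s, 0, s * a - 1, 0, a - s, 0, 1:] 6"
    using q by (simp add: numeral_eq_Suc zdvd_not_zless)
  moreover have "q \<noteq> 0" using q by simp
  ultimately show ?thesis using not_monogenic_if_integral_fraction[OF root \<open>\<theta> \<noteq> 0\<close>] by blast
qed

lemma not_monogenic_if_square_dvd_W3:
  fixes a b q \<kappa> :: int
  assumes q: "q \<ge> 2" and q_ndvd: "\<not> q dvd 2" and W: "a ^ 2 - 4 * b + 8 = q ^ 2 * \<kappa>"
  shows "\<not> monogenic [:1, 0, a, 0, b, 0, a, 0, 1:]"
proof -
  obtain \<theta> :: complex where root: "poly (map_poly of_int [:1, 0, a, 0, b, 0, a, 0, 1:]) \<theta> = 0"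
    and "\<theta> \<noteq> 0" and trace: "(\<theta> ^ 2 + 1 / \<theta> ^ 2) ^ 2 + of_int a * (\<theta> ^ 2 + 1 / \<theta> ^ 2) + of_int b - 2 = 0"
    by (rule reciprocal_octic_root_trace)
  define t where "t = \<theta> ^ 2 + 1 / \<theta> ^ 2"
  define w where "w = 2 * t + of_int a"
  define y where "y = w / of_int q"
  have tt: "t ^ 2 + of_int a * t = 2 - of_int b" using trace[folded t_def] by (simp add: eq_diff_eq)
  have "w ^ 2 = 4 * (t ^ 2 + of_int a * t) + of_int a ^ 2"
    unfolding w_def by (simp add: power2_eq_square algebra_simps)
  also have "\<dots> = of_int (a ^ 2 - 4 * b + 8)"
    unfolding tt by (simp add: algebra_simps)
  finally have "w ^ 2 = of_int (q ^ 2 * \<kappa>)" unfolding W .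
  then have "y ^ 2 + of_int 0 * y + of_int (- \<kappa>) = 0"
    using q by (simp add: y_def power_divide)
  then have "algebraic_int y" by (rule algebraic_int_quadratic)
  moreover have "of_int q * \<theta> ^ 2 * y = poly (map_poly of_int [:2, 0, a, 0, 2:]) \<theta>"
    using q \<open>\<theta> \<noteq> 0\<close> by (simp add: y_def w_def t_def map_poly_pCons field_simps eval_nat_numeral)
  moreover have "degree [:2, 0, a, 0, 2:] < degree [:1, 0, a, 0, b, 0, a, 0, 1:]"
    by simp
  moreover have "\<not> q dvd coeff [:2, 0, a, 0, 2:] 0"
    using q_ndvd by simp
  moreover have "q \<noteq> 0" using q by simp
  ultimately show ?thesis using not_monogenic_if_integral_fraction[OF root \<open>\<theta> \<noteq> 0\<close>] by blast
qed

lemma not_monogenic_if_W3_mod_16: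
  fixes a b \<kappa> :: int
  assumes W: "a ^ 2 - 4 * b + 4 = 16 * \<kappa>"
  shows "\<not> monogenic [:1, 0, a, 0, b, 0, a, 0, 1:]"
proof -
  obtain \<theta> :: complex where root: "poly (map_poly of_int [:1, 0, a, 0, b, 0, a, 0, 1:]) \<theta> = 0"
    and "\<theta> \<noteq> 0" and trace: "(\<theta> ^ 2 + 1 / \<theta> ^ 2) ^ 2 + of_int a * (\<theta> ^ 2 + 1 / \<theta> ^ 2) + of_int b - 2 = 0"
    by (rule reciprocal_octic_root_trace)
  define t where "t = \<theta> ^ 2 + 1 / \<theta> ^ 2"
  define w where "w = 2 * t + of_int a"
  define y where "y = (2 + w) / 4"
  have tt: "t ^ 2 + of_int a * t = 2 - of_int b" using trace[folded t_def] by (simp add: eq_diff_eq)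
  have "w ^ 2 - 4 = 4 * (t ^ 2 + of_int a * t) + of_int a ^ 2 - 4"
    unfolding w_def by (simp add: power2_eq_square algebra_simps)
  also have "\<dots> = of_int (a ^ 2 - 4 * b + 4)"
    unfolding tt by (simp add: algebra_simps)
  finally have "w ^ 2 - 4 = of_int (16 * \<kappa>)" unfolding W .
  then have "y ^ 2 + of_int (- 1) * y + of_int (- \<kappa>) = 0"
    by (simp add: y_def power2_eq_square field_simps)
  then have "algebraic_int y" by (rule algebraic_int_quadratic)
  moreover have "of_int 4 * \<theta> ^ 2 * y = poly (map_poly of_int [:2, 0, 2 + a, 0, 2:]) \<theta>"
    using \<open>\<theta> \<noteq> 0\<close> by (simp add: y_def w_def t_def map_poly_pCons field_simps eval_nat_numeral)
  moreover have "degree [:2, 0, 2 + a, 0, 2:] < degree [:1, 0, a, 0, b, 0, a, 0, 1:]"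
    by simp
  moreover have "\<not> (4 :: int) dvd coeff [:2, 0, 2 + a, 0, 2:] 0"
    by simp
  moreover have "(4 :: int) \<noteq> 0" by simp
  ultimately show ?thesis using not_monogenic_if_integral_fraction[OF root \<open>\<theta> \<noteq> 0\<close>] by blast
qed

lemma not_monogenic_if_mod_4:
  fixes a b :: int
  assumes "(a mod 4, b mod 4) \<in> {(0, 1), (2, 3)}"
  shows "\<not> monogenic [:1, 0, a, 0, b, 0, a, 0, 1:]"
proof -
  from assms consider "a mod 4 = 0" "b mod 4 = 1" | "a mod 4 = 2" "b mod 4 = 3" by auto
  then show ?thesis
  proof cases
    case 1
    then obtain \<alpha> \<beta> where "a = 4 * \<alpha>" "b = 4 * \<beta> + 1"
      by (metis add.commute add_0 mod_mult_div_eq)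
    then have "a ^ 2 - 4 * b + 4 = 16 * (\<alpha> ^ 2 - \<beta>)" by (simp add: power2_eq_square algebra_simps)
    then show ?thesis by (rule not_monogenic_if_W3_mod_16)
  next
    case 2
    then obtain \<alpha> \<beta> where "a = 4 * \<alpha> + 2" "b = 4 * \<beta> + 3"
      by (metis add.commute mod_mult_div_eq)
    then have "a ^ 2 - 4 * b + 8 = 4 ^ 2 * (\<alpha> ^ 2 + \<alpha> - \<beta>)"
      by (simp add: power2_eq_square algebra_simps)
    then show ?thesis by (rule not_monogenic_if_square_dvd_W3[of 4, rotated 2]) simp_all
  qed
qed

theorem mainTheorem3:
  fixes a b :: int
  defines "G \<equiv> [:1, 0, a, 0, b, 0, a, 0, 1:]"
    and "W1 \<equiv> b + 2 - 2 * a"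
    and "W2 \<equiv> b + 2 + 2 * a"
    and "W3 \<equiv> a ^ 2 - 4 * b + 8"
  assumes "a \<noteq> 0"
  shows "((\<exists>q :: int. prime q \<and> (q ^ 2 dvd W1 \<or> q ^ 2 dvd W2)) \<longrightarrow> \<not> monogenic G)
       \<and> ((squarefree W1 \<and> squarefree W2 \<and> (\<exists>q :: int. prime q \<and> q \<ge> 3 \<and> q ^ 2 dvd W3))
            \<longrightarrow> \<not> monogenic G)
       \<and> ((squarefree W1 \<and> squarefree W2 \<and> (\<forall>q :: int. prime q \<and> odd q \<longrightarrow> \<not> q ^ 2 dvd W3)
            \<and> ((a mod 4, b mod 4) \<in> {(0, 1), (2, 3)})) \<longrightarrow> \<not> monogenic G)"
proof (intro conjI impI)
  assume "\<exists>q. prime q \<and> (q ^ 2 dvd W1 \<or> q ^ 2 dvd W2)"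
  then obtain q \<kappa> :: int where "q \<ge> 2" and "W1 = q ^ 2 * \<kappa> \<or> W2 = q ^ 2 * \<kappa>"
    by (metis dvdE prime_ge_2_int)
  then show "\<not> monogenic G"
    using not_monogenic_if_square_dvd_W12[of 1 q b a \<kappa>] not_monogenic_if_square_dvd_W12[of "-1" q b a \<kappa>]
    unfolding G_def W1_def W2_def by auto
next
  assume "squarefree W1 \<and> squarefree W2 \<and> (\<exists>q. prime q \<and> q \<ge> 3 \<and> q ^ 2 dvd W3)"
  then obtain q \<kappa> :: int where "q \<ge> 3" and "W3 = q ^ 2 * \<kappa>" by (auto elim!: dvdE)
  moreover have "\<not> q dvd 2" using \<open>q \<ge> 3\<close> zdvd_imp_le[of q 2] by auto
  ultimately show "\<not> monogenic G"
    using not_monogenic_if_square_dvd_W3[of q a b \<kappa>] unfolding G_def W3_def by simp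
next
  assume "squarefree W1 \<and> squarefree W2 \<and> (\<forall>q. prime q \<and> odd q \<longrightarrow> \<not> q ^ 2 dvd W3)
          \<and> (a mod 4, b mod 4) \<in> {(0, 1), (2, 3)}"
  then show "\<not> monogenic G" unfolding G_def by (elim conjE) (erule not_monogenic_if_mod_4)
qed

end
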